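(* Let $\mathbf{L}=L_0+L_1\mathfrak{q}$, where $L_0\in\mathbb{R}^{n\times n}$ is lower triangular and $L_1\in\mathbb{R}^{n\times n}$ is lower triangular with zeros on the diagonal. Let $K_2\in\mathbb{R}^{n\times p}$ and $x_0\in\mathbb{R}^p$. If $L_0$ is invertible, then for any $r\in(0,1)$ the solution $z\in\ell_{2+}^n$ to $$\mathbf{L}\mathbf{L}^*z=(r^0K_2x_0,\ r^1K_2x_0,\ r^2K_2x_0,\ \ldots)$$ satisfies $$K_1z[0]=r^0K_2x_0,\qquad\text{where } K_1=(L_0+L_1r)L_0^\top.$$
   Context: $\ell_{2+}^n$ is the Hilbert space of square-summable sequences $(v[0],v[1],\ldots)$ with $v[k]\in\mathbb{R}^n$ and inner product $\langle x,y\rangle=\sum_k x[k]^\top y[k]$. The forward shift $\mathfrak{q}$ acts by $(\mathfrak{q}v)[k]=v[k+1]$, so $(\mathbf{L}v)[k]=L_0v[k]+L_1v[k+1]$; its adjoint $\mathfrak{q}^*$ acts by $(\mathfrak{q}^*v)[0]=0$, $(\mathfrak{q}^*v)[k]=v[k-1]$ for $k\ge1$, so $\mathbf{L}^*=L_0^\top+L_1^\top\mathfrak{q}^*$. *)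

theory Defs
  imports "HOL-Analysis.Analysis"
begin

definition ell2 :: "(nat \<Rightarrow> real ^ 'n) \<Rightarrow> bool" where
  "ell2 v \<longleftrightarrow> summable (\<lambda>k. (norm (v k))\<^sup>2)"

definition fshift :: "(nat \<Rightarrow> 'a) \<Rightarrow> nat \<Rightarrow> 'a" where
  "fshift v = (\<lambda>k. v (Suc k))"

definition fshift_adj :: "(nat \<Rightarrow> 'a::zero) \<Rightarrow> nat \<Rightarrow> 'a" where
  "fshift_adj v = (\<lambda>k. if k = 0 then 0 else v (k - 1))"

definition Lop :: "real ^ 'n ^ 'n \<Rightarrow> real ^ 'n ^ 'n \<Rightarrow> (nat \<Rightarrow> real ^ 'n) \<Rightarrow> nat \<Rightarrow> real ^ 'n" where
  "Lop L0 L1 v = (\<lambda>k. L0 *v v k + L1 *v fshift v k)"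

definition Lop_adj :: "real ^ 'n ^ 'n \<Rightarrow> real ^ 'n ^ 'n \<Rightarrow> (nat \<Rightarrow> real ^ 'n) \<Rightarrow> nat \<Rightarrow> real ^ 'n" where
  "Lop_adj L0 L1 v = (\<lambda>k. transpose L0 *v v k + transpose L1 *v fshift_adj v k)"

definition lower_triangular :: "real ^ ('n::{finite,linorder}) ^ ('n::{finite,linorder}) \<Rightarrow> bool" where
  "lower_triangular A \<longleftrightarrow> (\<forall>i j. i < j \<longrightarrow> A $ i $ j = 0)"

definition strictly_lower_triangular :: "real ^ ('n::{finite,linorder}) ^ ('n::{finite,linorder}) \<Rightarrow> bool" where
  "strictly_lower_triangular A \<longleftrightarrow> (\<forall>i j. i \<le> j \<longrightarrow> A $ i $ j = 0)"

end

theory Submission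
  imports Defs
begin

text \<open>Put \<open>w = L\<^sup>* z\<close>, so that \<open>L\<^sub>0 w[k] + L\<^sub>1 w[k+1] = r\<^sup>k c\<close> with \<open>c = K\<^sub>2 x\<^sub>0\<close>.
  The differences \<open>d[k] = w[k+1] - r w[k]\<close> then solve the homogeneous recurrence
  \<open>L\<^sub>0 d[k] + L\<^sub>1 d[k+1] = 0\<close>. Triangularity decouples it coordinate by coordinate: if all
  coordinates below \<open>i\<close> vanish for every \<open>k\<close>, row \<open>i\<close> reads \<open>L\<^sub>0[i,i] d[k][i] = 0\<close>, and the
  diagonal of the invertible triangular \<open>L\<^sub>0\<close> has no zeros. So \<open>d = 0\<close>, i.e. \<open>w[1] = r w[0]\<close>,
  and the equation at \<open>k = 0\<close> is the claim.\<close>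

text \<open>The library versions \<open>permutes_natset_le\<close> and \<open>det_lowerdiagonal\<close> require a
  \<open>wellorder\<close> index type; the statement only provides \<open>{finite,linorder}\<close>.\<close>

lemma permutes_le_imp_id:
  fixes p :: "'a::{finite,linorder} \<Rightarrow> 'a"
  assumes p: "p permutes UNIV" and le: "\<And>i. p i \<le> i"
  shows "p = id"
proof
  fix i
  have inj: "inj p"
    using p by (rule permutes_inj)
  have "p ` {..<i} = {..<i}"
    using le by (intro endo_inj_surj) (auto intro: order.strict_trans1 inj_on_subset[OF inj])
  moreover have "p i \<notin> p ` {..<i}"
    using inj by (auto simp: inj_eq)
  ultimately show "p i = id i"
    using le[of i] by auto
qed

lemma det_lower_triangular:
  fixes A :: "'a::comm_ring_1 ^ 'n::{finite,linorder} ^ 'n::{finite,linorder}"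
  assumes "\<And>i j. i < j \<Longrightarrow> A $ i $ j = 0"
  shows "det A = (\<Prod>i\<in>UNIV. A $ i $ i)"
proof -
  have "(\<Prod>i\<in>UNIV. A $ i $ p i) = 0" if "p permutes UNIV" "p \<noteq> id" for p
  proof -
    obtain i where "i < p i"
      using permutes_le_imp_id[OF \<open>p permutes UNIV\<close>] \<open>p \<noteq> id\<close> by (meson not_le)
    then show ?thesis
      using assms by (intro prod_zero) auto
  qed
  then have "det A = (\<Sum>p\<in>{id}. of_int (sign p) * (\<Prod>i\<in>UNIV. A $ i $ p i))"
    unfolding det_def by (intro sum.mono_neutral_right) (auto simp: finite_permutations)
  then show ?thesis
    by simp
qed

lemma lower_triangular_invertible_diag_nonzero:
  assumes "lower_triangular A" and "invertible A"
  shows "A $ i $ i \<noteq> 0"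
proof -
  have "det A = (\<Prod>i\<in>UNIV. A $ i $ i)"
    using assms(1) by (intro det_lower_triangular) (simp add: lower_triangular_def)
  moreover have "det A \<noteq> 0"
    using assms(2) by (simp add: invertible_det_nz)
  ultimately show ?thesis
    by auto
qed

lemma lower_triangular_mult_vec_nth:
  assumes "lower_triangular A" and "\<And>j. j < i \<Longrightarrow> v $ j = 0"
  shows "(A *v v) $ i = A $ i $ i * v $ i"
proof -
  have "A $ i $ j * v $ j = 0" if "j \<noteq> i" for j
    using assms(1) assms(2)[of j] that unfolding lower_triangular_def
    by (cases i j rule: linorder_cases) simp_all
  then have "(\<Sum>j\<in>UNIV. A $ i $ j * v $ j) = A $ i $ i * v $ i"
    by (subst sum.remove[of _ i]) (simp_all add: sum.neutral)
  then show ?thesis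
    by (simp add: matrix_vector_mult_def)
qed

lemma strictly_lower_triangular_mult_vec_nth:
  assumes "strictly_lower_triangular B" and "\<And>j. j < i \<Longrightarrow> v $ j = 0"
  shows "(B *v v) $ i = 0"
proof -
  have "B $ i $ j * v $ j = 0" for j
    using assms(1) assms(2)[of j] unfolding strictly_lower_triangular_def
    by (cases "j < i") (simp_all add: not_less)
  then show ?thesis
    by (simp add: matrix_vector_mult_def sum.neutral)
qed

lemma wf_less_finite_linorder: "wf {(x, y::'a::{finite,linorder}). x < y}"
  by (rule finite_acyclic_wf) (auto simp: acyclic_def trancl_def intro: finite_subset)

lemma triangular_recurrence_zero:
  assumes "lower_triangular A" and "invertible A" and "strictly_lower_triangular B"
    and rec: "\<And>k. A *v d k + B *v d (Suc k) = 0"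
  shows "d k = 0"
proof -
  have "d k $ i = 0" for k i
  proof (induction i arbitrary: k rule: wf_induct[OF wf_less_finite_linorder])
    case (1 i)
    then have below: "\<And>k j. j < i \<Longrightarrow> d k $ j = 0"
      by blast
    have "0 = (A *v d k + B *v d (Suc k)) $ i"
      by (simp add: rec)
    also have "\<dots> = A $ i $ i * d k $ i"
      using assms(1,3) below
      by (simp add: lower_triangular_mult_vec_nth strictly_lower_triangular_mult_vec_nth)
    finally show ?case
      using lower_triangular_invertible_diag_nonzero[OF assms(1,2)] by simp
  qed
  then show ?thesis
    by (simp add: vec_eq_iff)
qed

lemma triangular_recurrence_geometric:
  fixes r :: real
  assumes "lower_triangular A" and "invertible A" and "strictly_lower_triangular B"
    and rec: "\<And>k. A *v w k + B *v w (Suc k) = r ^ k *\<^sub>R c"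
  shows "w (Suc k) = r *\<^sub>R w k"
proof -
  have "A *v (w (Suc k) - r *\<^sub>R w k) + B *v (w (Suc (Suc k)) - r *\<^sub>R w (Suc k))
      = (A *v w (Suc k) + B *v w (Suc (Suc k))) - r *\<^sub>R (A *v w k + B *v w (Suc k))" for k
    by (simp add: algebra_simps)
  then have "A *v (w (Suc k) - r *\<^sub>R w k) + B *v (w (Suc (Suc k)) - r *\<^sub>R w (Suc k)) = 0" for k
    by (simp add: rec)
  from triangular_recurrence_zero[OF assms(1-3), of "\<lambda>k. w (Suc k) - r *\<^sub>R w k", OF this]
  show ?thesis
    by simp
qed

theorem lemma3:
  fixes L0 L1 :: "real ^ ('n::{finite,linorder}) ^ ('n::{finite,linorder})"
    and K2 :: "real ^ ('p::finite) ^ ('n::{finite,linorder})"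
    and x0 :: "real ^ ('p::finite)"
    and r :: real
    and z :: "nat \<Rightarrow> real ^ ('n::{finite,linorder})"
  assumes "lower_triangular L0"
    and "strictly_lower_triangular L1"
    and "invertible L0"
    and "0 < r" and "r < 1"
    and "ell2 z"
    and "Lop L0 L1 (Lop_adj L0 L1 z) = (\<lambda>k. (r ^ k) *\<^sub>R (K2 *v x0))"
  shows "((L0 + r *\<^sub>R L1) ** transpose L0) *v z 0 = K2 *v x0"
proof -
  define w where "w = Lop_adj L0 L1 z"
  have rec: "L0 *v w k + L1 *v w (Suc k) = r ^ k *\<^sub>R (K2 *v x0)" for k
    using fun_cong[OF assms(7), of k] by (simp add: w_def Lop_def fshift_def)
  have w0: "w 0 = transpose L0 *v z 0"
    by (simp add: w_def Lop_adj_def fshift_adj_def)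
  have w1: "w 1 = r *\<^sub>R w 0"
    using triangular_recurrence_geometric[OF assms(1,3,2) rec, of 0] by simp
  have "((L0 + r *\<^sub>R L1) ** transpose L0) *v z 0 = (L0 + r *\<^sub>R L1) *v w 0"
    by (simp only: w0 matrix_vector_mul_assoc)
  also have "\<dots> = L0 *v w 0 + L1 *v (r *\<^sub>R w 0)"
    by (simp add: matrix_vector_mult_add_rdistrib scaleR_matrix_vector_assoc[symmetric]
        matrix_vector_mult_scaleR)
  also have "\<dots> = K2 *v x0"
    using rec[of 0] w1 by simp
  finally show ?thesis .
qed

end
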